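(* Let $\mathfrak n=W\oplus\mathfrak z$ be a finite-dimensional 2-step nilpotent Lie algebra over a field of characteristic zero which is of TST type and satisfies $(\Lambda^2\mathfrak n)^{\mathfrak n}=\Lambda^2\mathfrak z$. Then every Lie bialgebra cobracket $\delta$ on $\mathfrak n$ satisfies $\delta(\mathfrak z)\subseteq\Lambda^2\mathfrak z$ and $\delta(W)\subseteq (W\wedge\mathfrak z)\oplus\Lambda^2\mathfrak z$.
   Context: $\mathfrak z$ is the center of $\mathfrak n$ and $W$ a fixed linear complement. Fix a basis $z_1,\dots,z_m$ of $\mathfrak z$ and define $T_i:W\to W^*$ by $[v,w]=\sum_iT_i(v)(w)z_i$ ($v,w\in W$). $\mathfrak n$ is of TST type if the only linear map $S:W^*\to W$ with $T_iST_k+T_kST_i=0$ for all $i,k$ is $S=0$. $(\Lambda^2\mathfrak n)^{\mathfrak n}$ denotes the invariants of $\Lambda^2\mathfrak n$ under the adjoint action $\mathrm{ad}_x(a\wedge b)=[x,a]\wedge b+a\wedge[x,b]$. A Lie bialgebra cobracket is a linear $\delta:\mathfrak n\to\Lambda^2\mathfrak n$ satisfying co-Jacobi ($\delta(x_1)\wedge x_2-x_1\wedge\delta(x_2)=0$ where $\delta(x)=x_1\wedge x_2$) and $\delta[x,y]=[\delta x,y]+[x,\delta y]$. *)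

theory Defs
  imports Main "HOL-Library.Function_Algebras"
begin

text \<open>
The Lie algebra n is k^B for a finite basis index type 'b, with basis
vectors e_b.  A subset Z of indices spans the subspace z (basis z_i = e_i, i in Z) and the
complementary indices span W.  The bracket is given by structure constants C:
[e_a, e_b] = sum_c C a b c e_c.  An element A of the exterior square is represented by its
antisymmetric coefficient array, A = sum_{i,j} A i j (e_i tensor e_j), so that
(x wedge y) i j = x i * y j - x j * y i.
\<close>

type_synonym ('b,'k) vec = "'b \<Rightarrow> 'k"
type_synonym ('b,'k) vec2 = "'b \<Rightarrow> 'b \<Rightarrow> 'k"
type_synonym ('b,'k) vec3 = "'b \<Rightarrow> 'b \<Rightarrow> 'b \<Rightarrow> 'k"

definition ebas :: "'b \<Rightarrow> ('b,'k::zero_neq_one) vec" where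
  "ebas b = (\<lambda>c. if c = b then 1 else 0)"

definition br :: "('b,'k) vec3 \<Rightarrow> ('b::finite,'k::comm_ring_1) vec \<Rightarrow> ('b,'k) vec \<Rightarrow> ('b,'k) vec" where
  "br C x y = (\<lambda>c. \<Sum>a\<in>UNIV. \<Sum>b\<in>UNIV. x a * y b * C a b c)"

definition is_lie :: "('b::finite,'k::comm_ring_1) vec3 \<Rightarrow> bool" where
  "is_lie C \<longleftrightarrow> (\<forall>x. br C x x = 0) \<and>
     (\<forall>x y z. br C x (br C y z) + br C y (br C z x) + br C z (br C x y) = 0)"

definition zsp :: "'b set \<Rightarrow> ('b,'k::zero) vec set" where
  "zsp Z = {x. \<forall>i. i \<notin> Z \<longrightarrow> x i = 0}"

definition Wsp :: "'b set \<Rightarrow> ('b,'k::zero) vec set" where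
  "Wsp Z = {x. \<forall>i. i \<in> Z \<longrightarrow> x i = 0}"

definition center :: "('b::finite,'k::comm_ring_1) vec3 \<Rightarrow> ('b,'k) vec set" where
  "center C = {x. \<forall>y. br C x y = 0}"

definition two_step :: "('b::finite,'k::comm_ring_1) vec3 \<Rightarrow> bool" where
  "two_step C \<longleftrightarrow> (\<forall>x y w. br C (br C x y) w = 0) \<and> (\<exists>x y. br C x y \<noteq> 0)"

definition Lam2 :: "('b,'k::ab_group_add) vec2 set" where
  "Lam2 = {A. \<forall>i j. A i j = - A j i}"

definition Lam2z :: "'b set \<Rightarrow> ('b,'k::ab_group_add) vec2 set" where
  "Lam2z Z = {A \<in> Lam2. \<forall>i j. i \<notin> Z \<or> j \<notin> Z \<longrightarrow> A i j = 0}"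

text \<open>(W wedge z) + Lambda^2 z: no W wedge W component.\<close>
definition WZ_Lam2z :: "'b set \<Rightarrow> ('b,'k::ab_group_add) vec2 set" where
  "WZ_Lam2z Z = {A \<in> Lam2. \<forall>i j. i \<notin> Z \<and> j \<notin> Z \<longrightarrow> A i j = 0}"

definition wedge :: "('b,'k::comm_ring_1) vec \<Rightarrow> ('b,'k) vec \<Rightarrow> ('b,'k) vec2" where
  "wedge x y = (\<lambda>i j. x i * y j - x j * y i)"

text \<open>Adjoint action on Lambda^2 n, the linear extension of
  ad_x (a wedge b) = [x,a] wedge b + a wedge [x,b].\<close>
definition ad2 :: "('b::finite,'k::comm_ring_1) vec3 \<Rightarrow> ('b,'k) vec \<Rightarrow> ('b,'k) vec2 \<Rightarrow> ('b,'k) vec2" where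
  "ad2 C x A = (\<lambda>i j. (\<Sum>k\<in>UNIV. br C x (ebas k) i * A k j) + (\<Sum>k\<in>UNIV. br C x (ebas k) j * A i k))"

definition inv2 :: "('b::finite,'k::comm_ring_1) vec3 \<Rightarrow> ('b,'k) vec2 set" where
  "inv2 C = {A \<in> Lam2. \<forall>x. ad2 C x A = 0}"

text \<open>T_i : W \<rightarrow> W^*, T_i(v)(w) = i-th z-coordinate of [v,w]; an element f of W^* is
  represented by its values f(e_b) on the basis of W (b \<notin> Z).\<close>
definition Tmap :: "('b::finite,'k::comm_ring_1) vec3 \<Rightarrow> 'b set \<Rightarrow> 'b \<Rightarrow> ('b,'k) vec \<Rightarrow> ('b,'k) vec" where
  "Tmap C Z i v = (\<lambda>b. if b \<in> Z then 0 else br C v (ebas b) i)"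

text \<open>A linear map S : W^* \<rightarrow> W given by its matrix (entries indexed by W-basis indices).\<close>
definition Smap :: "'b set \<Rightarrow> ('b,'k::comm_ring_1) vec2 \<Rightarrow> ('b,'k) vec \<Rightarrow> ('b,'k) vec" where
  "Smap Z S f = (\<lambda>a. if a \<in> Z then 0 else (\<Sum>b\<in>-Z. S a b * f b))"

definition TST_type :: "('b::finite,'k::comm_ring_1) vec3 \<Rightarrow> 'b set \<Rightarrow> bool" where
  "TST_type C Z \<longleftrightarrow> (\<forall>S. (\<forall>i\<in>Z. \<forall>k\<in>Z. \<forall>v\<in>Wsp Z.
        Tmap C Z i (Smap Z S (Tmap C Z k v)) + Tmap C Z k (Smap Z S (Tmap C Z i v)) = 0)
      \<longrightarrow> (\<forall>a b. a \<notin> Z \<longrightarrow> b \<notin> Z \<longrightarrow> S a b = 0))"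

text \<open>A linear map delta : n \<rightarrow> Lambda^2 n given by delta(e_k) = D k.\<close>
definition cob :: "('b::finite,'k::comm_ring_1) vec3 \<Rightarrow> ('b,'k) vec \<Rightarrow> ('b,'k) vec2" where
  "cob D x = (\<lambda>i j. \<Sum>k\<in>UNIV. x k * D k i j)"

text \<open>Wedge products Lambda^2 x Lambda^1 \<rightarrow> Lambda^3 and Lambda^1 x Lambda^2 \<rightarrow> Lambda^3
  (alternating coefficient arrays, consistent with the convention for wedge).\<close>
definition wedge21 :: "('b,'k::comm_ring_1) vec2 \<Rightarrow> ('b,'k) vec \<Rightarrow> ('b,'k) vec3" where
  "wedge21 A x = (\<lambda>p q r. A p q * x r + A q r * x p + A r p * x q)"

definition wedge12 :: "('b,'k::comm_ring_1) vec \<Rightarrow> ('b,'k) vec2 \<Rightarrow> ('b,'k) vec3" where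
  "wedge12 x A = (\<lambda>p q r. x p * A q r + x q * A r p + x r * A p q)"

text \<open>The extension Lambda^2 n \<rightarrow> Lambda^3 n, (x1 wedge x2) \<mapsto> delta(x1) wedge x2 - x1 wedge delta(x2),
  applied to A = sum_{i,j} A i j e_i tensor e_j = (1/2) sum_{i,j} A i j e_i wedge e_j.\<close>
definition dext :: "('b::finite,'k::field) vec3 \<Rightarrow> ('b,'k) vec2 \<Rightarrow> ('b,'k) vec3" where
  "dext D A = (\<lambda>p q r. (\<Sum>i\<in>UNIV. \<Sum>j\<in>UNIV. A i j / 2 *
      (wedge21 (cob D (ebas i)) (ebas j) p q r - wedge12 (ebas i) (cob D (ebas j)) p q r)))"

definition lie_bialg_cobracket :: "('b::finite,'k::field) vec3 \<Rightarrow> ('b,'k) vec3 \<Rightarrow> bool" where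
  "lie_bialg_cobracket C D \<longleftrightarrow>
     (\<forall>x. cob D x \<in> Lam2) \<and>
     (\<forall>x. dext D (cob D x) = 0) \<and>
     (\<forall>x y. cob D (br C x y) = ad2 C x (cob D y) - ad2 C y (cob D x))"

end

theory Submission
  imports Defs
begin

text \<open>
  The cobracket is only used through the cocycle identity. Since
  \<open>\<delta>[x,y] = ad\<^sub>x \<delta>y - ad\<^sub>y \<delta>x\<close>, the image of a central
  element is \<open>ad\<close>-invariant, hence lies in \<open>\<Lambda>\<^sup>2\<mathfrak>z\<close>. For the
  second claim, apply the cocycle identity to \<open>[u,w] \<in> \<mathfrak>z\<close> and read off the
  \<open>\<mathfrak>z \<otimes> W\<close> component: it says that the trilinear form
  \<open>h\<^sub>i\<^sub>k(u,v,w) = T\<^sub>i(u) \<delta>(w) T\<^sub>k(v)\<close> is symmetric in \<open>u,w\<close>, while the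
  antisymmetry of \<open>\<delta>(w)\<close> gives \<open>h\<^sub>i\<^sub>k(u,v,w) = -h\<^sub>k\<^sub>i(v,u,w)\<close>. Alternating
  the two relations six times yields \<open>h\<^sub>i\<^sub>k + h\<^sub>k\<^sub>i = 0\<close>, i.e. the
  \<open>W \<otimes> W\<close> block \<open>S\<close> of \<open>\<delta>(x)\<close> satisfies
  \<open>T\<^sub>i S T\<^sub>k + T\<^sub>k S T\<^sub>i = 0\<close>, so \<open>S = 0\<close> by the TST condition.
\<close>

lemma br_add_left: "br C (x + y) z = br C x z + br C y z"
  unfolding br_def by (rule ext) (simp add: algebra_simps sum.distrib)

lemma br_add_right: "br C z (x + y) = br C z x + br C z y"
  unfolding br_def by (rule ext) (simp add: algebra_simps sum.distrib)

lemma br_antisym: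
  assumes "is_lie C"
  shows "br C x y = - br C y x"
proof -
  have "br C (x + y) (x + y) = 0" "br C x x = 0" "br C y y = 0"
    using assms unfolding is_lie_def by auto
  then have "br C x y + br C y x = 0"
    by (simp add: br_add_left br_add_right add.commute)
  then show ?thesis
    by (simp add: eq_neg_iff_add_eq_0)
qed

lemma br_ebas_right: "br C u (ebas b) i = (\<Sum>a\<in>UNIV. u a * C a b i)"
proof -
  have "(\<Sum>c\<in>UNIV. u a * ebas b c * C a c i) = u a * C a b i" for a
  proof -
    have "(\<Sum>c\<in>UNIV. u a * ebas b c * C a c i) = (\<Sum>c\<in>UNIV. if c = b then u a * C a c i else 0)"
      unfolding ebas_def by (rule sum.cong) auto
    then show ?thesis
      by (simp add: sum.delta')
  qed
  then show ?thesis
    unfolding br_def by simp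
qed

lemma br_eq_sum_ebas_right: "br C u y i = (\<Sum>b\<in>UNIV. y b * br C u (ebas b) i)"
proof -
  have "(\<Sum>b\<in>UNIV. y b * br C u (ebas b) i) = (\<Sum>b\<in>UNIV. \<Sum>a\<in>UNIV. y b * (u a * C a b i))"
    by (simp add: br_ebas_right sum_distrib_left)
  also have "\<dots> = (\<Sum>a\<in>UNIV. \<Sum>b\<in>UNIV. u a * y b * C a b i)"
    by (subst sum.swap) (simp add: algebra_simps)
  finally show ?thesis
    unfolding br_def by simp
qed

lemma ebas_in_zsp: "a \<in> Z \<Longrightarrow> ebas a \<in> zsp Z"
  unfolding zsp_def ebas_def by auto

lemma cob_zero: "cob D 0 = 0"
  unfolding cob_def by (auto simp: fun_eq_iff)

lemma ad2_center: "x \<in> center C \<Longrightarrow> ad2 C x A = 0"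
  unfolding ad2_def center_def by (simp add: fun_eq_iff)

lemma cob_center_in_inv2:
  assumes cob_Lam2: "\<And>x. cob D x \<in> Lam2"
    and cocycle: "\<And>x y. cob D (br C x y) = ad2 C x (cob D y) - ad2 C y (cob D x)"
    and "x \<in> center C"
  shows "cob D x \<in> inv2 C"
proof -
  have "ad2 C y (cob D x) = 0" for y
  proof -
    have "br C x y = 0"
      using \<open>x \<in> center C\<close> unfolding center_def by blast
    then show ?thesis
      using cocycle[of x y] ad2_center[OF \<open>x \<in> center C\<close>] by (simp add: cob_zero)
  qed
  then show ?thesis
    using cob_Lam2 unfolding inv2_def by auto
qed

text \<open>\<open>ad_coord C i u a\<close> is the matrix entry \<open>[u, e\<^sub>a]\<^sub>i\<close>; for \<open>i \<in> Z\<close> and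
  \<open>a \<notin> Z\<close> it is \<open>T\<^sub>i(u)(e\<^sub>a)\<close>.\<close>

definition ad_coord :: "('b::finite,'k::comm_ring_1) vec3 \<Rightarrow> 'b \<Rightarrow> ('b,'k) vec \<Rightarrow> 'b \<Rightarrow> 'k" where
  "ad_coord C i u a = br C u (ebas a) i"

definition tst_form ::
    "('b::finite,'k::comm_ring_1) vec3 \<Rightarrow> 'b \<Rightarrow> 'b \<Rightarrow> ('b,'k) vec \<Rightarrow> ('b,'k) vec \<Rightarrow> ('b,'k) vec2 \<Rightarrow> 'k" where
  "tst_form C i k u v A = (\<Sum>a\<in>UNIV. \<Sum>c\<in>UNIV. ad_coord C i u a * A a c * ad_coord C k v c)"

lemma tst_form_antisym:
  assumes "A \<in> Lam2"
  shows "tst_form C i k u v A = - tst_form C k i v u A"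
proof -
  have "tst_form C k i v u A = (\<Sum>a\<in>UNIV. \<Sum>c\<in>UNIV. - (ad_coord C i u a * A a c * ad_coord C k v c))"
    unfolding tst_form_def
  proof (subst sum.swap, intro sum.cong refl)
    fix a c
    have "A c a = - A a c"
      using assms unfolding Lam2_def by blast
    then show "ad_coord C k v c * A c a * ad_coord C i u a = - (ad_coord C i u a * A a c * ad_coord C k v c)"
      by (simp add: algebra_simps)
  qed
  then show ?thesis
    unfolding tst_form_def by (simp add: sum_negf)
qed

locale two_step_cocycle =
  fixes C D :: "('b::finite, 'k::comm_ring_1) vec3" and Z :: "'b set"
  assumes lie: "is_lie C"
    and two_step: "two_step C"
    and center_eq: "center C = zsp Z"
    and invariants_eq: "inv2 C = Lam2z Z"
    and cob_Lam2: "cob D x \<in> Lam2"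
    and cocycle: "cob D (br C x y) = ad2 C x (cob D y) - ad2 C y (cob D x)"
begin

lemma br_in_zsp: "br C u w \<in> zsp Z"
  using two_step center_eq unfolding two_step_def center_def by auto

lemma ad_coord_center_index:
  assumes "a \<in> Z"
  shows "ad_coord C i u a = 0"
proof -
  have "br C (ebas a) u = 0"
    using ebas_in_zsp[OF assms] center_eq unfolding center_def by blast
  then show ?thesis
    using br_antisym[OF lie, of u "ebas a"] unfolding ad_coord_def by simp
qed

lemma cob_zsp: "x \<in> zsp Z \<Longrightarrow> cob D x \<in> Lam2z Z"
  using cob_center_in_inv2[OF cob_Lam2 cocycle] center_eq invariants_eq by blast

lemma ad2_coord:
  assumes "c \<notin> Z"
  shows "ad2 C v A i c = (\<Sum>a\<in>UNIV. ad_coord C i v a * A a c)"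
  using br_in_zsp assms unfolding ad2_def ad_coord_def zsp_def by simp

text \<open>The \<open>(i,c)\<close> entry of the cocycle identity for \<open>[u,w] \<in> \<mathfrak>z\<close>, whose image
  has no \<open>\<mathfrak>z \<otimes> W\<close> part.\<close>

lemma cob_exchange:
  assumes "i \<in> Z" "c \<notin> Z"
  shows "(\<Sum>a\<in>UNIV. ad_coord C i u a * cob D w a c) = (\<Sum>a\<in>UNIV. ad_coord C i w a * cob D u a c)"
proof -
  have "cob D (br C u w) i c = 0"
    using cob_zsp[OF br_in_zsp] assms unfolding Lam2z_def by auto
  then show ?thesis
    using fun_cong[OF fun_cong[OF cocycle[of u w], of i], of c] ad2_coord[OF assms(2)] by simp
qed

lemma tst_form_swap:
  assumes "i \<in> Z"
  shows "tst_form C i k u v (cob D w) = tst_form C i k w v (cob D u)"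
proof -
  have "tst_form C i k u v (cob D w)
      = (\<Sum>c\<in>UNIV. (\<Sum>a\<in>UNIV. ad_coord C i u a * cob D w a c) * ad_coord C k v c)"
    unfolding tst_form_def by (subst sum.swap) (simp add: sum_distrib_right)
  also have "\<dots> = (\<Sum>c\<in>UNIV. (\<Sum>a\<in>UNIV. ad_coord C i w a * cob D u a c) * ad_coord C k v c)"
  proof (rule sum.cong)
    fix c
    show "(\<Sum>a\<in>UNIV. ad_coord C i u a * cob D w a c) * ad_coord C k v c
        = (\<Sum>a\<in>UNIV. ad_coord C i w a * cob D u a c) * ad_coord C k v c"
      using cob_exchange[OF assms] ad_coord_center_index by (cases "c \<in> Z") simp_all
  qed simp
  also have "\<dots> = tst_form C i k w v (cob D u)"
    unfolding tst_form_def by (subst sum.swap) (simp add: sum_distrib_right)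
  finally show ?thesis .
qed

lemma tst_form_symmetrization:
  assumes "i \<in> Z" "k \<in> Z"
  shows "tst_form C i k u v (cob D w) + tst_form C k i u v (cob D w) = 0"
proof -
  note antisym = tst_form_antisym[OF cob_Lam2]
  have "tst_form C i k u v (cob D w) = tst_form C i k w v (cob D u)"
    by (rule tst_form_swap[OF assms(1)])
  also have "\<dots> = - tst_form C k i v w (cob D u)"
    by (rule antisym)
  also have "\<dots> = - tst_form C k i u w (cob D v)"
    by (simp only: tst_form_swap[OF assms(2), where k = i and u = v and v = w and w = u])
  also have "\<dots> = tst_form C i k w u (cob D v)"
    by (simp only: antisym[where i = i and k = k and u = w and v = u] minus_minus)
  also have "\<dots> = tst_form C i k v u (cob D w)"
    by (rule tst_form_swap[OF assms(1)])
  also have "\<dots> = - tst_form C k i u v (cob D w)"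
    by (rule antisym)
  finally show ?thesis
    by simp
qed

lemma Tmap_Smap_Tmap:
  "Tmap C Z i (Smap Z S (Tmap C Z k v)) b = (if b \<in> Z then 0 else - tst_form C i k (ebas b) v S)"
proof (cases "b \<in> Z")
  case True
  then show ?thesis
    unfolding Tmap_def by simp
next
  case False
  define y where "y = Smap Z S (Tmap C Z k v)"
  have y: "y a = (if a \<in> Z then 0 else (\<Sum>c\<in>UNIV. S a c * ad_coord C k v c))" for a
  proof -
    have "(\<Sum>c\<in>-Z. S a c * Tmap C Z k v c) = (\<Sum>c\<in>-Z. S a c * ad_coord C k v c)"
      unfolding Tmap_def ad_coord_def by (rule sum.cong) auto
    also have "\<dots> = (\<Sum>c\<in>UNIV. S a c * ad_coord C k v c)"
      by (rule sum.mono_neutral_left) (auto simp: ad_coord_center_index)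
    finally show ?thesis
      unfolding y_def Smap_def by simp
  qed
  have "br C y (ebas b) i = - br C (ebas b) y i"
    using br_antisym[OF lie] by (metis uminus_apply)
  also have "br C (ebas b) y i = (\<Sum>a\<in>UNIV. y a * ad_coord C i (ebas b) a)"
    unfolding ad_coord_def by (rule br_eq_sum_ebas_right)
  also have "\<dots> = (\<Sum>a\<in>UNIV. (\<Sum>c\<in>UNIV. S a c * ad_coord C k v c) * ad_coord C i (ebas b) a)"
    by (rule sum.cong) (auto simp: y ad_coord_center_index)
  also have "\<dots> = tst_form C i k (ebas b) v S"
    unfolding tst_form_def
    by (simp add: sum_distrib_right sum_distrib_left mult.commute mult.left_commute)
  finally show ?thesis
    using False unfolding Tmap_def y_def by simp
qed

lemma cob_WZ_Lam2z:
  assumes "TST_type C Z"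
  shows "cob D x \<in> WZ_Lam2z Z"
proof -
  have "Tmap C Z i (Smap Z (cob D x) (Tmap C Z k v))
      + Tmap C Z k (Smap Z (cob D x) (Tmap C Z i v)) = 0"
    if "i \<in> Z" "k \<in> Z" for i k v
    using tst_form_symmetrization[OF that]
    by (auto simp: fun_eq_iff Tmap_Smap_Tmap add_eq_0_iff)
  then have "\<forall>a b. a \<notin> Z \<longrightarrow> b \<notin> Z \<longrightarrow> cob D x a b = 0"
    using assms unfolding TST_type_def by blast
  then show ?thesis
    using cob_Lam2[of x] unfolding WZ_Lam2z_def by auto
qed

end

theorem mainTheorem5:
  fixes C D :: "('b::finite, 'k::field_char_0) vec3" and Z :: "'b set"
  assumes "is_lie C"
    and "two_step C"
    and "center C = zsp Z"
    and "TST_type C Z"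
    and "inv2 C = Lam2z Z"
    and "lie_bialg_cobracket C D"
  shows "(\<forall>x \<in> zsp Z. cob D x \<in> Lam2z Z) \<and> (\<forall>x \<in> Wsp Z. cob D x \<in> WZ_Lam2z Z)"
proof -
  interpret two_step_cocycle C D Z
    using assms unfolding lie_bialg_cobracket_def two_step_cocycle_def by blast
  show ?thesis
    using cob_zsp cob_WZ_Lam2z[OF assms(4)] by blast
qed

end
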